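(* Let $A$ be a sequence algebra, $P\ne0$ a homogeneous normed $A$-module of finite type with each $P_n$ identified isometrically with $l_1^0(\Lambda_n)$, with natural basis $\{e^n_\nu:\nu\in\Lambda_n\}$. Let $S$ be the unit sphere of $P$ and $E(S)$ the set of $z\in S$ such that for every $n$, $z_n$ is a scalar multiple of $e^n_\nu$ for some $\nu\in\Lambda_n$. Then for every normed $A$-module $X$ and every bounded morphism $\varphi:P\to X$, $\|\varphi\|=\sup\{\|\varphi(z)\|:z\in E(S)\}$.
   Context: Modules are contractive ($\|a\cdot x\|\le\|a\|\|x\|$); morphisms are bounded $A$-module maps. $l_1^0(\Lambda)$: finitely supported functions on $\Lambda$ with the $l_1$-norm; its natural basis consists of indicator functions of points. A sequence algebra is a normed algebra of complex sequences with coordinatewise operations containing $c_{00}$ as a dense subalgebra, with $\|\mathbf p^n\|=1$, where $\mathbf p^n$ has $1$ in place $n$ and $0$ elsewhere. $x_n:=\mathbf p^n\cdot x$, $P_n:=\{\mathbf p^n\cdot x\}$. Homogeneous: $\|x_n\|\le\|y_n\|$ for all $n$ implies $\|x\|\le\|y\|$. Finite type: for each $x$, $x_n=0$ for large $n$. *)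

theory Defs
  imports "HOL-Analysis.Analysis"
begin

type_synonym cseq = "nat \<Rightarrow> complex"

definition pe :: "nat \<Rightarrow> cseq" where
  "pe n = (\<lambda>k. if k = n then 1 else 0)"

definition c00 :: "cseq set" where
  "c00 = {a. finite {k. a k \<noteq> 0}}"

definition seq_algebra :: "cseq set \<Rightarrow> (cseq \<Rightarrow> real) \<Rightarrow> bool" where
  "seq_algebra SA nA \<longleftrightarrow>
     (\<forall>a\<in>SA. \<forall>b\<in>SA. (\<lambda>k. a k + b k) \<in> SA \<and> (\<lambda>k. a k * b k) \<in> SA) \<and>
     (\<forall>c. \<forall>a\<in>SA. (\<lambda>k. c * a k) \<in> SA) \<and>
     c00 \<subseteq> SA \<and>
     (\<forall>a\<in>SA. 0 \<le> nA a \<and> (nA a = 0 \<longleftrightarrow> a = (\<lambda>k. 0))) \<and>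
     (\<forall>a\<in>SA. \<forall>b\<in>SA. nA (\<lambda>k. a k + b k) \<le> nA a + nA b) \<and>
     (\<forall>c. \<forall>a\<in>SA. nA (\<lambda>k. c * a k) = cmod c * nA a) \<and>
     (\<forall>a\<in>SA. \<forall>b\<in>SA. nA (\<lambda>k. a k * b k) \<le> nA a * nA b) \<and>
     (\<forall>a\<in>SA. \<forall>e>0. \<exists>b\<in>c00. nA (\<lambda>k. a k - b k) < e) \<and>
     (\<forall>n. nA (pe n) = 1)"

definition complex_scaling :: "(complex \<Rightarrow> 'p::real_normed_vector \<Rightarrow> 'p) \<Rightarrow> bool" where
  "complex_scaling sm \<longleftrightarrow>
     (\<forall>r x. sm (complex_of_real r) x = r *\<^sub>R x) \<and>
     (\<forall>c d x. sm (c * d) x = sm c (sm d x)) \<and>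
     (\<forall>c d x. sm (c + d) x = sm c x + sm d x) \<and>
     (\<forall>c x y. sm c (x + y) = sm c x + sm c y) \<and>
     (\<forall>c x. norm (sm c x) = cmod c * norm x)"

definition normed_module ::
  "cseq set \<Rightarrow> (cseq \<Rightarrow> real) \<Rightarrow> (complex \<Rightarrow> 'p::real_normed_vector \<Rightarrow> 'p) \<Rightarrow>
   (cseq \<Rightarrow> 'p \<Rightarrow> 'p) \<Rightarrow> bool" where
  "normed_module SA nA sm act \<longleftrightarrow> complex_scaling sm \<and>
     (\<forall>a\<in>SA. \<forall>x y. act a (x + y) = act a x + act a y) \<and>
     (\<forall>a\<in>SA. \<forall>b\<in>SA. \<forall>x. act (\<lambda>k. a k + b k) x = act a x + act b x) \<and>
     (\<forall>a\<in>SA. \<forall>c x. act (\<lambda>k. c * a k) x = sm c (act a x)) \<and>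
     (\<forall>a\<in>SA. \<forall>c x. act a (sm c x) = sm c (act a x)) \<and>
     (\<forall>a\<in>SA. \<forall>b\<in>SA. \<forall>x. act (\<lambda>k. a k * b k) x = act a (act b x)) \<and>
     (\<forall>a\<in>SA. \<forall>x. norm (act a x) \<le> nA a * norm x)"

definition module_morphism ::
  "cseq set \<Rightarrow> (complex \<Rightarrow> 'p::real_normed_vector \<Rightarrow> 'p) \<Rightarrow> (cseq \<Rightarrow> 'p \<Rightarrow> 'p) \<Rightarrow>
   (complex \<Rightarrow> 'x::real_normed_vector \<Rightarrow> 'x) \<Rightarrow> (cseq \<Rightarrow> 'x \<Rightarrow> 'x) \<Rightarrow> ('p \<Rightarrow> 'x) \<Rightarrow> bool" where
  "module_morphism SA smP actP smX actX f \<longleftrightarrow>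
     bounded_linear f \<and> (\<forall>c x. f (smP c x) = smX c (f x)) \<and>
     (\<forall>a\<in>SA. \<forall>x. f (actP a x) = actX a (f x))"

definition homogeneous :: "(cseq \<Rightarrow> 'p::real_normed_vector \<Rightarrow> 'p) \<Rightarrow> bool" where
  "homogeneous act \<longleftrightarrow>
     (\<forall>x y. (\<forall>n. norm (act (pe n) x) \<le> norm (act (pe n) y)) \<longrightarrow> norm x \<le> norm y)"

definition finite_type :: "(cseq \<Rightarrow> 'p::real_normed_vector \<Rightarrow> 'p) \<Rightarrow> bool" where
  "finite_type act \<longleftrightarrow> (\<forall>x. \<exists>N. \<forall>n\<ge>N. act (pe n) x = 0)"

definition l10 :: "'l set \<Rightarrow> ('l \<Rightarrow> complex) set" where
  "l10 L = {f. finite {v. f v \<noteq> 0} \<and> (\<forall>v. v \<notin> L \<longrightarrow> f v = 0)}"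

definition l1norm :: "('l \<Rightarrow> complex) \<Rightarrow> real" where
  "l1norm f = (\<Sum>v\<in>{v. f v \<noteq> 0}. cmod (f v))"

definition delta :: "'l \<Rightarrow> 'l \<Rightarrow> complex" where
  "delta v = (\<lambda>w. if w = v then 1 else 0)"

definition l1_iso :: "(complex \<Rightarrow> 'p::real_normed_vector \<Rightarrow> 'p) \<Rightarrow> (cseq \<Rightarrow> 'p \<Rightarrow> 'p) \<Rightarrow> nat \<Rightarrow> 'l set \<Rightarrow>
    (('l \<Rightarrow> complex) \<Rightarrow> 'p) \<Rightarrow> bool" where
  "l1_iso sm act n L J \<longleftrightarrow>
     bij_betw J (l10 L) (range (act (pe n))) \<and>
     (\<forall>f\<in>l10 L. \<forall>g\<in>l10 L. J (\<lambda>v. f v + g v) = J f + J g) \<and>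
     (\<forall>f\<in>l10 L. \<forall>c. J (\<lambda>v. c * f v) = sm c (J f)) \<and>
     (\<forall>f\<in>l10 L. norm (J f) = l1norm f)"

end

theory Submission
  imports Defs
begin

(* Call x atomic at n if x_n is a
   scalar multiple of a basis vector e^n_v.  The key observation is a convexity
   argument: if x is atomic at every n > k, write x_k = sum_v f(v) e^k_v with
   s = |f|_1.  Replacing x_k by the vector s * phase(f v) * e^k_v gives vectors y_v
   which, by homogeneity, have the same norm as x, are atomic at every n >= k, and
   x = sum_v (|f v| / s) y_v is a convex combination of them.  By induction on k,
   any linear map bounded by M on the atomic unit sphere is bounded by M * |x| on
   every vector that is atomic from some coordinate on; finite type says that this
   is every vector. *)


section \<open>Finitely supported functions\<close>

lemma l10_zero: "(\<lambda>v. 0) \<in> l10 L"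
  by (simp add: l10_def)

lemma l10_add:
  assumes "f \<in> l10 L" "g \<in> l10 L"
  shows "(\<lambda>v. f v + g v) \<in> l10 L"
proof -
  have "{v. f v + g v \<noteq> 0} \<subseteq> {v. f v \<noteq> 0} \<union> {v. g v \<noteq> 0}" by auto
  then show ?thesis using assms by (auto simp: l10_def intro: finite_subset)
qed

lemma l10_scale:
  assumes "f \<in> l10 L"
  shows "(\<lambda>v. c * f v) \<in> l10 L"
proof -
  have "{v. c * f v \<noteq> 0} \<subseteq> {v. f v \<noteq> 0}" by auto
  then show ?thesis using assms by (auto simp: l10_def intro: finite_subset)
qed

lemma l10_sum:
  "finite F \<Longrightarrow> (\<And>i. i \<in> F \<Longrightarrow> g i \<in> l10 L) \<Longrightarrow> (\<lambda>v. \<Sum>i\<in>F. g i v) \<in> l10 L"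
  by (induction F rule: finite_induct) (auto intro: l10_zero l10_add)

lemma delta_in_l10: "v \<in> L \<Longrightarrow> delta v \<in> l10 L"
  by (auto simp: l10_def delta_def)

lemma l1norm_delta: "l1norm (delta v) = 1"
proof -
  have "{w. delta v w \<noteq> 0} = {v}" by (auto simp: delta_def)
  then show ?thesis by (simp add: l1norm_def delta_def)
qed

lemma l10_delta_expansion:
  assumes "finite {v. f v \<noteq> 0}"
  shows "(\<lambda>u. \<Sum>v\<in>{v. f v \<noteq> 0}. f v * delta v u) = f"
proof
  fix u
  show "(\<Sum>v\<in>{v. f v \<noteq> 0}. f v * delta v u) = f u"
  proof (cases "f u = 0")
    case False
    then have "(\<Sum>v\<in>{v. f v \<noteq> 0}. f v * delta v u) = (\<Sum>v\<in>{u}. f v * delta v u)"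
      using assms by (intro sum.mono_neutral_right) (auto simp: delta_def)
    then show ?thesis by (simp add: delta_def)
  qed (auto simp: delta_def intro!: sum.neutral)
qed

lemma additive_on_l10_sum:
  assumes add: "\<forall>f\<in>l10 L. \<forall>g\<in>l10 L. J (\<lambda>v. f v + g v) = J f + J g"
    and zero: "J (\<lambda>v. 0) = (0 :: 'p::real_normed_vector)"
  shows "finite F \<Longrightarrow> (\<And>i. i \<in> F \<Longrightarrow> g i \<in> l10 L) \<Longrightarrow>
    J (\<lambda>v. \<Sum>i\<in>F. g i v) = (\<Sum>i\<in>F. J (g i))"
proof (induction F rule: finite_induct)
  case (insert a F)
  then have "J (\<lambda>v. g a v + (\<Sum>i\<in>F. g i v)) = J (g a) + J (\<lambda>v. \<Sum>i\<in>F. g i v)"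
    using add l10_sum[of F g L] by simp
  then show ?case using insert by simp
qed (simp add: zero)


lemma complex_scaling_of_real:
  "complex_scaling sm \<Longrightarrow> sm (complex_of_real r) x = r *\<^sub>R x"
  by (simp add: complex_scaling_def)

lemma complex_scaling_mult:
  "complex_scaling sm \<Longrightarrow> sm (c * d) x = sm c (sm d x)"
  by (simp add: complex_scaling_def)

lemma complex_scaling_norm:
  "complex_scaling sm \<Longrightarrow> norm (sm c x) = cmod c * norm x"
  by (simp add: complex_scaling_def)

lemma complex_scaling_zero_left: "complex_scaling sm \<Longrightarrow> sm 0 x = 0"
  using complex_scaling_norm[of sm 0 x] by simp

lemma complex_scaling_zero_right: "complex_scaling sm \<Longrightarrow> sm c 0 = 0"
  using complex_scaling_norm[of sm c 0] by simp

lemma complex_scaling_one: "complex_scaling sm \<Longrightarrow> sm 1 x = x"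
  using complex_scaling_of_real[of sm 1 x] by simp


section \<open>Modules with l_1 coordinate spaces\<close>

lemma pe_in_seq_algebra:
  assumes "seq_algebra SA nA"
  shows "pe n \<in> SA"
proof -
  have "{k. pe n k \<noteq> 0} = {n}" by (auto simp: pe_def)
  then have "pe n \<in> c00" by (simp add: c00_def)
  with assms show ?thesis by (auto simp: seq_algebra_def)
qed

locale l1_coordinated_module =
  fixes SA :: "cseq set" and nA :: "cseq \<Rightarrow> real"
    and smP :: "complex \<Rightarrow> 'p::real_normed_vector \<Rightarrow> 'p"
    and actP :: "cseq \<Rightarrow> 'p \<Rightarrow> 'p"
    and \<Lambda> :: "nat \<Rightarrow> 'l set"
    and J :: "nat \<Rightarrow> ('l \<Rightarrow> complex) \<Rightarrow> 'p"
  assumes seq_alg: "seq_algebra SA nA"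
    and module: "normed_module SA nA smP actP"
    and homog: "homogeneous actP"
    and iso: "l1_iso smP actP n (\<Lambda> n) (J n)"
begin

lemma scaling: "complex_scaling smP"
  using module by (simp add: normed_module_def)

definition coord :: "nat \<Rightarrow> 'p \<Rightarrow> 'p" where
  "coord n = actP (pe n)"

lemma coord_add: "coord n (x + y) = coord n x + coord n y"
  using module pe_in_seq_algebra[OF seq_alg] by (simp add: normed_module_def coord_def)

lemma coord_zero: "coord n 0 = 0"
  using coord_add[of n 0 0] by simp

lemma coord_diff: "coord n (x - y) = coord n x - coord n y"
  using coord_add[of n "x - y" y] by (simp add: algebra_simps)

lemma coord_sm: "coord n (smP c x) = smP c (coord n x)"
  using module pe_in_seq_algebra[OF seq_alg] by (simp add: normed_module_def coord_def)

lemma coord_scaleR: "coord n (r *\<^sub>R x) = r *\<^sub>R coord n x"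
  using coord_sm[of n "complex_of_real r" x] by (simp add: complex_scaling_of_real[OF scaling])

text \<open>The projections are orthogonal idempotents, since p^m p^k = [m = k] p^k.\<close>

lemma coord_coord: "coord m (coord k u) = (if m = k then coord k u else 0)"
proof -
  have SA: "pe m \<in> SA" "pe k \<in> SA" using pe_in_seq_algebra[OF seq_alg] by auto
  have "coord m (coord k u) = actP (\<lambda>j. pe m j * pe k j) u"
    using module SA by (simp add: normed_module_def coord_def)
  also have "(\<lambda>j. pe m j * pe k j) = (\<lambda>j. (if m = k then 1 else 0) * pe k j)"
    by (auto simp: pe_def)
  also have "actP \<dots> u = smP (if m = k then 1 else 0) (coord k u)"
    using module SA by (simp add: normed_module_def coord_def)
  finally show ?thesis
    by (simp add: complex_scaling_one[OF scaling] complex_scaling_zero_left[OF scaling])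
qed

lemma norm_eq_by_coords:
  assumes "\<And>n. norm (coord n x) = norm (coord n y)"
  shows "norm x = norm y"
  using homog assms unfolding homogeneous_def coord_def by (metis antisym order_refl)

lemma J_add: "f \<in> l10 (\<Lambda> n) \<Longrightarrow> g \<in> l10 (\<Lambda> n) \<Longrightarrow> J n (\<lambda>v. f v + g v) = J n f + J n g"
  using iso[of n] by (simp add: l1_iso_def)

lemma J_scale: "f \<in> l10 (\<Lambda> n) \<Longrightarrow> J n (\<lambda>v. c * f v) = smP c (J n f)"
  using iso[of n] by (simp add: l1_iso_def)

lemma J_norm: "f \<in> l10 (\<Lambda> n) \<Longrightarrow> norm (J n f) = l1norm f"
  using iso[of n] by (simp add: l1_iso_def)

lemma J_zero: "J n (\<lambda>v. 0) = 0"
  using J_scale[OF l10_zero, of n 0] by (simp add: complex_scaling_zero_left[OF scaling])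

lemma J_onto: "\<exists>f\<in>l10 (\<Lambda> n). J n f = coord n x"
proof -
  have "coord n x \<in> J n ` l10 (\<Lambda> n)"
    using iso[of n] by (simp add: l1_iso_def bij_betw_def coord_def)
  then show ?thesis by auto
qed

lemma norm_J_delta: "v \<in> \<Lambda> n \<Longrightarrow> norm (J n (delta v)) = 1"
  by (simp add: J_norm delta_in_l10 l1norm_delta)

lemma coord_J_delta:
  assumes "v \<in> \<Lambda> k"
  shows "coord m (smP c (J k (delta v))) = (if m = k then smP c (J k (delta v)) else 0)"
proof -
  have "J k (delta v) \<in> range (coord k)"
    using iso[of k] delta_in_l10[OF assms] by (auto simp: l1_iso_def bij_betw_def coord_def)
  then obtain u where "J k (delta v) = coord k u" by auto
  then show ?thesis
    by (simp add: coord_sm coord_coord complex_scaling_zero_right[OF scaling])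
qed

lemma coord_replace:
  assumes "\<And>m. coord m w = (if m = k then w else 0)"
  shows "coord m (x - coord k x + w) = (if m = k then w else coord m x)"
  using assms by (simp add: coord_add coord_diff coord_coord)

lemma J_convex_combination:
  assumes f: "f \<in> l10 (\<Lambda> k)" and s: "l1norm f = s"
  shows "(\<Sum>v\<in>{v. f v \<noteq> 0}. (cmod (f v) / s) *\<^sub>R
            smP (of_real s * f v / of_real (cmod (f v))) (J k (delta v))) = J k f"
proof -
  let ?F = "{v. f v \<noteq> 0}"
  have fin: "finite ?F" and supp: "\<And>v. v \<in> ?F \<Longrightarrow> v \<in> \<Lambda> k"
    using f by (auto simp: l10_def)
  have s_pos: "s > 0" if "v \<in> ?F" for v
  proof -
    have "cmod (f v) \<le> s"
      using s fin that by (auto simp: l1norm_def intro: member_le_sum)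
    moreover have "cmod (f v) > 0" using that by simp
    ultimately show ?thesis by linarith
  qed
  have summand: "(cmod (f v) / s) *\<^sub>R smP (of_real s * f v / of_real (cmod (f v))) (J k (delta v))
      = J k (\<lambda>u. f v * delta v u)" if "v \<in> ?F" for v
  proof -
    let ?c = "of_real s * f v / of_real (cmod (f v))"
    have phase: "complex_of_real (cmod (f v) / s) * ?c = f v"
      using that s_pos[OF that] by (simp add: field_simps)
    have "(cmod (f v) / s) *\<^sub>R smP ?c (J k (delta v))
        = smP (of_real (cmod (f v) / s)) (smP ?c (J k (delta v)))"
      by (simp only: complex_scaling_of_real[OF scaling])
    also have "\<dots> = smP (f v) (J k (delta v))"
      by (simp only: complex_scaling_mult[OF scaling, symmetric] phase)
    also have "\<dots> = J k (\<lambda>u. f v * delta v u)"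
      by (rule J_scale[OF delta_in_l10[OF supp[OF that]], symmetric])
    finally show ?thesis .
  qed
  have "(\<Sum>v\<in>?F. J k (\<lambda>u. f v * delta v u)) = J k (\<lambda>u. \<Sum>v\<in>?F. f v * delta v u)"
    using J_add J_zero fin supp
    by (intro additive_on_l10_sum[symmetric]) (auto intro!: l10_scale delta_in_l10)
  also have "\<dots> = J k f"
    using l10_delta_expansion[OF fin] by simp
  finally show ?thesis using summand by simp
qed

definition atomic_at :: "nat \<Rightarrow> 'p \<Rightarrow> bool" where
  "atomic_at n z \<longleftrightarrow> coord n z = 0 \<or> (\<exists>v\<in>\<Lambda> n. \<exists>c. coord n z = smP c (J n (delta v)))"

definition atomic_sphere :: "'p set" where
  "atomic_sphere = {z. norm z = 1 \<and> (\<forall>n. atomic_at n z)}"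

lemma atomic_at_scaleR:
  assumes "atomic_at n z"
  shows "atomic_at n (r *\<^sub>R z)"
proof -
  consider "coord n z = 0" | v c where "v \<in> \<Lambda> n" "coord n z = smP c (J n (delta v))"
    using assms unfolding atomic_at_def by blast
  then show ?thesis
  proof cases
    case 1
    then show ?thesis by (simp add: atomic_at_def coord_scaleR)
  next
    case (2 v c)
    have "coord n (r *\<^sub>R z) = smP (of_real r * c) (J n (delta v))"
      by (simp add: coord_scaleR 2 complex_scaling_mult[OF scaling]
          complex_scaling_of_real[OF scaling])
    then show ?thesis using 2 by (auto simp: atomic_at_def)
  qed
qed

text \<open>A nonzero P contains a basis vector e^n_v, which lies in the atomic sphere.\<close>

lemma atomic_sphere_nonempty:
  fixes x :: 'p
  assumes "x \<noteq> 0"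
  shows "atomic_sphere \<noteq> {}"
proof -
  obtain n where n: "coord n x \<noteq> 0"
    using norm_eq_by_coords[of x 0] assms by (auto simp: coord_zero)
  obtain f where f: "f \<in> l10 (\<Lambda> n)" "J n f = coord n x" using J_onto by blast
  have "f \<noteq> (\<lambda>v. 0)" using f n J_zero by auto
  then obtain v where "f v \<noteq> 0" by auto
  then have v: "v \<in> \<Lambda> n" using f by (auto simp: l10_def)
  have "coord m (J n (delta v)) = (if m = n then smP 1 (J n (delta v)) else 0)" for m
    using coord_J_delta[OF v, of m 1] by (simp add: complex_scaling_one[OF scaling])
  then have "J n (delta v) \<in> atomic_sphere"
    using v norm_J_delta[OF v] by (auto simp: atomic_sphere_def atomic_at_def)
  then show ?thesis by blast
qed

lemma atomic_convex_decomposition: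
  assumes x: "\<forall>n>k. atomic_at n x"
  shows "x \<in> convex hull {y. norm y = norm x \<and> (\<forall>n\<ge>k. atomic_at n y)}" (is "_ \<in> convex hull ?S")
proof -
  obtain f where f: "f \<in> l10 (\<Lambda> k)" "J k f = coord k x" using J_onto by blast
  define F where "F = {v. f v \<noteq> 0}"
  define s where "s = l1norm f"
  show ?thesis
  proof (cases "F = {}")
    case True
    then have "f = (\<lambda>v. 0)" by (auto simp: F_def)
    then have "coord k x = 0" using f J_zero by simp
    then have "x \<in> ?S" using x by (auto simp: atomic_at_def le_less)
    then show ?thesis by (rule hull_inc)
  next
    case False
    have finF: "finite F" and supp: "\<And>v. v \<in> F \<Longrightarrow> v \<in> \<Lambda> k"
      using f by (auto simp: F_def l10_def)
    have "s > 0" unfolding s_def l1norm_def F_def[symmetric]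
      using False finF by (intro sum_pos) (auto simp: F_def)
    define w where "w v = smP (of_real s * f v / of_real (cmod (f v))) (J k (delta v))" for v
    define y where "y v = x - coord k x + w v" for v
    have coord_y: "coord m (y v) = (if m = k then w v else coord m x)" if "v \<in> F" for v m
      unfolding y_def w_def by (rule coord_replace) (simp add: coord_J_delta supp that)
    have "y v \<in> ?S" if v: "v \<in> F" for v
    proof -
      have "norm (w v) = s"
        using v \<open>s > 0\<close> norm_J_delta[OF supp[OF v]]
        by (simp add: w_def complex_scaling_norm[OF scaling] norm_mult norm_divide F_def)
      moreover have "norm (coord k x) = s"
        using J_norm[OF f(1)] f(2) s_def by simp
      ultimately have "norm (coord n (y v)) = norm (coord n x)" for n by (simp add: coord_y v)
      then have "norm (y v) = norm x" by (rule norm_eq_by_coords)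
      moreover have "atomic_at n (y v)" if "n \<ge> k" for n
        using x that coord_y[OF v] supp[OF v] by (cases "n = k") (auto simp: atomic_at_def w_def)
      ultimately show ?thesis by simp
    qed
    then have in_hull: "\<And>v. v \<in> F \<Longrightarrow> y v \<in> convex hull ?S" by (simp add: hull_inc)
    have weights: "(\<Sum>v\<in>F. cmod (f v) / s) = 1"
      using \<open>s > 0\<close> by (simp add: s_def l1norm_def F_def flip: sum_divide_distrib)
    have "(\<Sum>v\<in>F. (cmod (f v) / s) *\<^sub>R y v)
        = (\<Sum>v\<in>F. cmod (f v) / s) *\<^sub>R (x - coord k x) + (\<Sum>v\<in>F. (cmod (f v) / s) *\<^sub>R w v)"
      by (simp add: y_def scaleR_right_distrib sum.distrib scaleR_sum_left)
    also have "\<dots> = x"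
      using weights J_convex_combination[OF f(1) s_def[symmetric]] f(2)
      by (simp add: w_def F_def)
    finally have "x = (\<Sum>v\<in>F. (cmod (f v) / s) *\<^sub>R y v)" ..
    also have "\<dots> \<in> convex hull ?S"
      using finF weights in_hull \<open>s > 0\<close> by (intro convex_sum) auto
    finally show ?thesis .
  qed
qed

lemma atomic_bound:
  fixes \<phi> :: "'p \<Rightarrow> 'x::real_normed_vector"
  assumes lin: "linear \<phi>" and M: "\<forall>z\<in>atomic_sphere. norm (\<phi> z) \<le> M"
  shows "\<forall>n\<ge>k. atomic_at n x \<Longrightarrow> norm (\<phi> x) \<le> M * norm x"
proof (induction k arbitrary: x)
  case 0
  show ?case
  proof (cases "x = 0")
    case False
    define z where "z = (1 / norm x) *\<^sub>R x"
    have "z \<in> atomic_sphere"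
      using False "0" atomic_at_scaleR by (simp add: atomic_sphere_def z_def)
    moreover have "\<phi> x = norm x *\<^sub>R \<phi> z"
      using False linear_scale[OF lin] by (simp add: z_def)
    moreover have "norm (\<phi> z) \<le> M" using M \<open>z \<in> atomic_sphere\<close> by blast
    ultimately show ?thesis by (simp add: mult.commute[of "norm x"] mult_right_mono)
  qed (simp add: linear_0[OF lin])
next
  case (Suc k)
  let ?S = "{y. norm y = norm x \<and> (\<forall>n\<ge>k. atomic_at n y)}"
  have "?S \<subseteq> \<phi> -` cball 0 (M * norm x)"
  proof
    fix y assume "y \<in> ?S"
    then have "norm y = norm x" and "\<forall>n\<ge>k. atomic_at n y" by auto
    then have "norm (\<phi> y) \<le> M * norm x" using Suc.IH[of y] by simp
    then show "y \<in> \<phi> -` cball 0 (M * norm x)" by simp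
  qed
  moreover have "convex (\<phi> -` cball 0 (M * norm x))"
    by (rule convex_linear_vimage[OF lin convex_cball])
  ultimately have "convex hull ?S \<subseteq> \<phi> -` cball 0 (M * norm x)"
    by (rule hull_minimal)
  moreover have "x \<in> convex hull ?S"
    using Suc.prems by (intro atomic_convex_decomposition) auto
  ultimately have "x \<in> \<phi> -` cball 0 (M * norm x)" by blast
  then show ?case by simp
qed

theorem onorm_eq_Sup_atomic_sphere:
  fixes \<phi> :: "'p \<Rightarrow> 'x::real_normed_vector"
  assumes fin: "finite_type actP" and nonzero: "\<exists>x::'p. x \<noteq> 0" and bl: "bounded_linear \<phi>"
  shows "onorm \<phi> = Sup ((\<lambda>z. norm (\<phi> z)) ` atomic_sphere)"
proof -
  define M where "M = Sup ((\<lambda>z. norm (\<phi> z)) ` atomic_sphere)"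
  have nonempty: "atomic_sphere \<noteq> {}" using nonzero atomic_sphere_nonempty by blast
  have onorm_bound_on_sphere: "norm (\<phi> z) \<le> onorm \<phi>" if "z \<in> atomic_sphere" for z
    using onorm[OF bl, of z] that by (simp add: atomic_sphere_def)
  then have M_upper: "\<forall>z\<in>atomic_sphere. norm (\<phi> z) \<le> M"
    unfolding M_def by (auto intro!: cSup_upper bdd_aboveI2)
  have "norm (\<phi> x) \<le> M * norm x" for x
  proof -
    obtain N where "\<forall>n\<ge>N. coord n x = 0" using fin by (auto simp: finite_type_def coord_def)
    then have "\<forall>n\<ge>N. atomic_at n x" by (simp add: atomic_at_def)
    then show ?thesis by (rule atomic_bound[OF bounded_linear.linear[OF bl] M_upper])
  qed
  moreover have "0 \<le> M" using nonempty M_upper by (meson all_not_in_conv norm_ge_zero order_trans)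
  ultimately have "onorm \<phi> \<le> M" by (intro onorm_bound)
  moreover have "M \<le> onorm \<phi>"
    unfolding M_def using nonempty onorm_bound_on_sphere by (intro cSup_least) auto
  ultimately show ?thesis by (simp add: M_def)
qed

end


theorem mainTheorem19:
  fixes SA :: "cseq set" and nA :: "cseq \<Rightarrow> real"
    and actP :: "cseq \<Rightarrow> 'p::real_normed_vector \<Rightarrow> 'p"
    and \<Lambda> :: "nat \<Rightarrow> 'l set"
    and J :: "nat \<Rightarrow> ('l \<Rightarrow> complex) \<Rightarrow> 'p"
    and smP :: "complex \<Rightarrow> 'p \<Rightarrow> 'p" and smX :: "complex \<Rightarrow> 'x::real_normed_vector \<Rightarrow> 'x"
    and actX :: "cseq \<Rightarrow> 'x \<Rightarrow> 'x"
    and \<phi> :: "'p \<Rightarrow> 'x"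
  assumes "seq_algebra SA nA"
    and "normed_module SA nA smP actP"
    and "\<exists>x::'p. x \<noteq> 0"
    and "homogeneous actP"
    and "finite_type actP"
    and "\<forall>n. l1_iso smP actP n (\<Lambda> n) (J n)"
    and "normed_module SA nA smX actX"
    and "module_morphism SA smP actP smX actX \<phi>"
  shows "onorm \<phi> = Sup ((\<lambda>z. norm (\<phi> z)) `
           {z. norm z = 1 \<and>
               (\<forall>n. actP (pe n) z = 0 \<or>
                    (\<exists>v\<in>\<Lambda> n. \<exists>c. actP (pe n) z = smP c (J n (delta v))))})"
proof -
  interpret P: l1_coordinated_module SA nA smP actP \<Lambda> J
    using assms(1,2,4,6) by unfold_locales auto
  have sphere: "{z. norm z = 1 \<and>
           (\<forall>n. actP (pe n) z = 0 \<or> (\<exists>v\<in>\<Lambda> n. \<exists>c. actP (pe n) z = smP c (J n (delta v))))}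
      = P.atomic_sphere"
    by (simp add: P.atomic_sphere_def P.atomic_at_def P.coord_def)
  have "bounded_linear \<phi>"
    using assms(8) by (simp add: module_morphism_def)
  then show ?thesis
    by (subst sphere) (rule P.onorm_eq_Sup_atomic_sphere[OF assms(5,3)])
qed

end
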